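(* Under the setup in the context, for every arm $j\in\{1,\dots,K\}$ and every $\delta>0$, $$\bigcup_{i=1}^{\infty}\bigl\{|\tilde\mu_{j,i}-\mu_j|>U(i,\delta)\bigr\}\;\subseteq\;\bigcup_{i=1}^{\infty}\bigl\{|\hat\mu_{j,i}-\mu_j|>U'(i,\delta)\bigr\}.$$
   Context: There are $K$ arms. For each arm $j\in[K]=\{1,\dots,K\}$, the rewards $r_{j,1},r_{j,2},\dots$ are i.i.d. real random variables with values in a fixed interval $[a,b]$ and mean $\mu_j$, and they are $\sigma^2$-subgaussian in the sense that $\mathbb P(|r_{j,k}-\mu_j|>t)\le 2e^{-t^2/(2\sigma^2)}$ for all $t>0$. Rewards of different arms are independent. Fix integers $B\ge 1$ and $\alpha\ge 2$, and set $t_i=\alpha^i$ for $i\ge1$. For $\delta>0$ and $i\ge 1$ define $$U'(i,\delta)=\sigma\sqrt{\frac{2\log(4Kt_i^2/\delta)}{t_i}},$$ and define $U(i,\delta)$ recursively by $U(0,\delta)=b-a$ and $$U(i,\delta)=\frac{1}{2^B}\bigl[U'(i,\delta)+U(i-1,\delta)\bigr]+U'(i,\delta)\quad(i\ge1).$$ Let $\hat\mu_{j,i}=\frac1{t_i}\sum_{k=1}^{t_i}r_{j,k}$ be the empirical mean of the first $t_i$ rewards of arm $j$. Quantizer: for a real interval $[\ell,u]$, divide it into $2^B$ consecutive bins of equal width $(u-\ell)/2^B$; for any $x\in\mathbb R$ (whether or not $x\in[\ell,u]$), $Q_{[\ell,u]}(x)$ denotes the midpoint of a bin whose midpoint is nearest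 to $x$ (so $|Q_{[\ell,u]}(x)-x|\le (u-\ell)/2^{B+1}$ whenever $x\in[\ell,u]$). Decoded estimates: $\tilde\mu_{j,0}$ is drawn uniformly from $[a,b]$, and for $i\ge1$, $$\tilde\mu_{j,i}=Q_{I_{j,i}}(\hat\mu_{j,i}),\qquad I_{j,i}=\bigl[\tilde\mu_{j,i-1}-U(i-1,\delta)-U'(i,\delta),\ \tilde\mu_{j,i-1}+U(i-1,\delta)+U'(i,\delta)\bigr].$$ *)

theory Defs
  imports "HOL-Probability.Probability"
begin

definition tlen :: "nat \<Rightarrow> nat \<Rightarrow> nat" where
  "tlen \<alpha> i = \<alpha> ^ i"

definition Uprime :: "real \<Rightarrow> nat \<Rightarrow> nat \<Rightarrow> real \<Rightarrow> nat \<Rightarrow> real" where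
  "Uprime \<sigma> K \<alpha> \<delta> i =
     \<sigma> * sqrt (2 * ln (4 * real K * (real (tlen \<alpha> i))\<^sup>2 / \<delta>) / real (tlen \<alpha> i))"

primrec Urad :: "real \<Rightarrow> real \<Rightarrow> real \<Rightarrow> nat \<Rightarrow> nat \<Rightarrow> nat \<Rightarrow> real \<Rightarrow> nat \<Rightarrow> real" where
  "Urad a b \<sigma> K \<alpha> B \<delta> 0 = b - a"
| "Urad a b \<sigma> K \<alpha> B \<delta> (Suc i) =
     (Uprime \<sigma> K \<alpha> \<delta> (Suc i) + Urad a b \<sigma> K \<alpha> B \<delta> i) / 2 ^ B + Uprime \<sigma> K \<alpha> \<delta> (Suc i)"

definition emp_mean :: "(nat \<Rightarrow> nat \<Rightarrow> 'a \<Rightarrow> real) \<Rightarrow> nat \<Rightarrow> nat \<Rightarrow> nat \<Rightarrow> 'a \<Rightarrow> real" where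
  "emp_mean r \<alpha> j i \<omega> = (\<Sum>k = 1..tlen \<alpha> i. r j k \<omega>) / real (tlen \<alpha> i)"

definition bin_mids :: "real \<Rightarrow> real \<Rightarrow> nat \<Rightarrow> real set" where
  "bin_mids l u B = {l + (real k + 1/2) * (u - l) / 2 ^ B | k. k < 2 ^ B}"

text \<open>y is an admissible value of Q_[l,u](x): a bin midpoint nearest to x.\<close>
definition is_quant :: "real \<Rightarrow> real \<Rightarrow> nat \<Rightarrow> real \<Rightarrow> real \<Rightarrow> bool" where
  "is_quant l u B x y \<longleftrightarrow> y \<in> bin_mids l u B \<and> (\<forall>m \<in> bin_mids l u B. \<bar>y - x\<bar> \<le> \<bar>m - x\<bar>)"

end

theory Submission
  imports Defs
begin

text \<open>
  On the event that every empirical mean is within \<open>U'(i)\<close> of \<open>\<mu>\<close>, every decoded estimate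
  is within \<open>U(i)\<close> of \<open>\<mu>\<close>, by induction on \<open>i\<close>. If the estimate of round \<open>i-1\<close> is within
  \<open>U(i-1)\<close> of \<open>\<mu>\<close>, the empirical mean of round \<open>i\<close> lies in the decoding interval of half-width
  \<open>U(i-1) + U'(i)\<close>, so quantizing it costs at most half a bin width, \<open>(U(i-1) + U'(i)) / 2^B\<close>,
  and the triangle inequality gives \<open>U(i)\<close>. The base case holds because the initial estimate
  and \<open>\<mu>\<close> both lie in \<open>[a,b]\<close>.
\<close>

lemma bin_mid_near:
  fixes l u x :: real and B :: nat
  assumes "l \<le> x" "x \<le> u"
  shows "\<exists>m \<in> bin_mids l u B. \<bar>m - x\<bar> \<le> (u - l) / 2 ^ Suc B"
proof -
  define w where "w = (u - l) / 2 ^ B"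
  define t where "t = (x - l) / w"
  have w0: "w \<ge> 0" using assms unfolding w_def by simp
  have x_eq: "x - l = t * w" and t0: "t \<ge> 0" and tB: "t \<le> 2 ^ B"
  proof -
    show "x - l = t * w"
      using assms by (cases "w = 0") (auto simp: t_def w_def)
    show "t \<ge> 0" using assms w0 by (simp add: t_def)
    show "t \<le> 2 ^ B"
      using assms w0 by (cases "w = 0") (auto simp: t_def w_def divide_le_eq)
  qed
  \<comment> \<open>The clamp only matters for \<open>x = u\<close>, which lies on the upper edge of the last bin.\<close>
  define k where "k = min (nat \<lfloor>t\<rfloor>) (2 ^ B - 1)"
  have k_lt: "k < 2 ^ B"
    using zero_less_power[of "2::nat" B] unfolding k_def by linarith
  have k_near: "\<bar>real k + 1/2 - t\<bar> \<le> 1/2"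
  proof (cases "t < 2 ^ B")
    case True
    then have "nat \<lfloor>t\<rfloor> < 2 ^ B" using t0 by (simp add: nat_less_iff floor_less_iff)
    then have "k = nat \<lfloor>t\<rfloor>" unfolding k_def by linarith
    then have "real k = \<lfloor>t\<rfloor>" using t0 by simp
    then show ?thesis using floor_correct[of t] by linarith
  next
    case False
    then have "t = 2 ^ B" using tB by simp
    moreover have "k = 2 ^ B - 1"
      unfolding k_def using \<open>t = 2 ^ B\<close> by (simp add: nat_power_eq)
    ultimately show ?thesis by (simp add: of_nat_diff)
  qed
  have "l + (real k + 1/2) * w \<in> bin_mids l u B"
    using k_lt unfolding bin_mids_def w_def by force
  moreover have "\<bar>l + (real k + 1/2) * w - x\<bar> = \<bar>real k + 1/2 - t\<bar> * w"
  proof -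
    have "l + (real k + 1/2) * w - x = (real k + 1/2 - t) * w"
      using x_eq by (simp add: algebra_simps)
    then show ?thesis using w0 by (simp add: abs_mult)
  qed
  moreover have "(u - l) / 2 ^ Suc B = 1/2 * w" unfolding w_def by simp
  ultimately show ?thesis
    using k_near w0 by (metis mult_right_mono)
qed

lemma is_quant_error_le:
  fixes l u x y :: real and B :: nat
  assumes "l \<le> x" "x \<le> u" "is_quant l u B x y"
  shows "\<bar>y - x\<bar> \<le> (u - l) / 2 ^ Suc B"
  using bin_mid_near[OF assms(1,2)] assms(3) unfolding is_quant_def by force

lemma (in prob_space) expectation_in_interval:
  fixes X :: "'a \<Rightarrow> real"
  assumes "X \<in> borel_measurable M" "\<And>\<omega>. \<omega> \<in> space M \<Longrightarrow> X \<omega> \<in> {a..b}"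
  shows "expectation X \<in> {a..b}"
proof -
  have "integrable M X"
  proof (rule integrable_const_bound[where B = "max \<bar>a\<bar> \<bar>b\<bar>"])
    show "AE \<omega> in M. norm (X \<omega>) \<le> max \<bar>a\<bar> \<bar>b\<bar>"
      using assms(2) by (intro AE_I2) fastforce
  qed (rule assms(1))
  then show ?thesis
    using assms(2) by (auto intro!: integral_ge_const integral_le_const AE_I2)
qed

lemma decoded_error_le_Urad:
  fixes c x :: "nat \<Rightarrow> real" and m :: real
  assumes init: "\<bar>c 0 - m\<bar> \<le> b - a"
    and emp: "\<And>i. i \<ge> 1 \<Longrightarrow> \<bar>x i - m\<bar> \<le> Uprime \<sigma> K \<alpha> \<delta> i"
    and quant: "\<And>i. i \<ge> 1 \<Longrightarrow>
       is_quant
         (c (i - 1) - Urad a b \<sigma> K \<alpha> B \<delta> (i - 1) - Uprime \<sigma> K \<alpha> \<delta> i)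
         (c (i - 1) + Urad a b \<sigma> K \<alpha> B \<delta> (i - 1) + Uprime \<sigma> K \<alpha> \<delta> i)
         B (x i) (c i)"
  shows "\<bar>c i - m\<bar> \<le> Urad a b \<sigma> K \<alpha> B \<delta> i"
proof (induction i)
  case 0
  show ?case using init by simp
next
  case (Suc i)
  let ?U = "Urad a b \<sigma> K \<alpha> B \<delta> i" and ?V = "Uprime \<sigma> K \<alpha> \<delta> (Suc i)"
  have x_near: "\<bar>x (Suc i) - m\<bar> \<le> ?V" using emp[of "Suc i"] by simp
  have "\<bar>c (Suc i) - x (Suc i)\<bar> \<le> ((c i + ?U + ?V) - (c i - ?U - ?V)) / 2 ^ Suc B"
    using quant[of "Suc i"] Suc.IH x_near by (intro is_quant_error_le) auto
  also have "\<dots> = (?V + ?U) / 2 ^ B" by (simp add: field_simps)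
  finally show ?case using x_near by simp
qed

theorem lemma1:
  fixes M :: "'a measure"
    and K B \<alpha> :: nat and a b \<sigma> \<delta> :: real
    and r :: "nat \<Rightarrow> nat \<Rightarrow> 'a \<Rightarrow> real"
    and \<mu> :: "nat \<Rightarrow> real"
    and \<mu>t :: "nat \<Rightarrow> nat \<Rightarrow> 'a \<Rightarrow> real"
    and j :: nat
  assumes "prob_space M"
    and "a < b" and "\<sigma> > 0" and "B \<ge> 1" and "\<alpha> \<ge> 2"
    and rv: "\<And>j' k. j' \<in> {1..K} \<Longrightarrow> k \<ge> 1 \<Longrightarrow> r j' k \<in> borel_measurable M"
    and range: "\<And>j' k \<omega>. j' \<in> {1..K} \<Longrightarrow> k \<ge> 1 \<Longrightarrow> \<omega> \<in> space M \<Longrightarrow> r j' k \<omega> \<in> {a..b}"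
    and indep: "prob_space.indep_vars M (\<lambda>_. borel) (\<lambda>(j', k). r j' k) ({1..K} \<times> {1..})"
    and ident: "\<And>j' k. j' \<in> {1..K} \<Longrightarrow> k \<ge> 1 \<Longrightarrow> distr M borel (r j' k) = distr M borel (r j' 1)"
    and mean: "\<And>j' k. j' \<in> {1..K} \<Longrightarrow> k \<ge> 1 \<Longrightarrow> prob_space.expectation M (r j' k) = \<mu> j'"
    and subg: "\<And>j' k t. j' \<in> {1..K} \<Longrightarrow> k \<ge> 1 \<Longrightarrow> t > 0 \<Longrightarrow>
       measure M {\<omega> \<in> space M. \<bar>r j' k \<omega> - \<mu> j'\<bar> > t} \<le> 2 * exp (- t\<^sup>2 / (2 * \<sigma>\<^sup>2))"
    and init_rv: "\<And>j'. j' \<in> {1..K} \<Longrightarrow> \<mu>t j' 0 \<in> borel_measurable M"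
    and init_unif: "\<And>j'. j' \<in> {1..K} \<Longrightarrow> distr M lborel (\<mu>t j' 0) = uniform_measure lborel {a..b}"
    and init_range: "\<And>j' \<omega>. j' \<in> {1..K} \<Longrightarrow> \<omega> \<in> space M \<Longrightarrow> \<mu>t j' 0 \<omega> \<in> {a..b}"
    and decode: "\<And>j' i \<omega>. j' \<in> {1..K} \<Longrightarrow> i \<ge> 1 \<Longrightarrow> \<omega> \<in> space M \<Longrightarrow>
       is_quant
         (\<mu>t j' (i - 1) \<omega> - Urad a b \<sigma> K \<alpha> B \<delta> (i - 1) - Uprime \<sigma> K \<alpha> \<delta> i)
         (\<mu>t j' (i - 1) \<omega> + Urad a b \<sigma> K \<alpha> B \<delta> (i - 1) + Uprime \<sigma> K \<alpha> \<delta> i)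
         B (emp_mean r \<alpha> j' i \<omega>) (\<mu>t j' i \<omega>)"
    and "j \<in> {1..K}" and "\<delta> > 0"
  shows "(\<Union>i\<in>{1..}. {\<omega> \<in> space M. \<bar>\<mu>t j i \<omega> - \<mu> j\<bar> > Urad a b \<sigma> K \<alpha> B \<delta> i})
         \<subseteq> (\<Union>i\<in>{1..}. {\<omega> \<in> space M. \<bar>emp_mean r \<alpha> j i \<omega> - \<mu> j\<bar> > Uprime \<sigma> K \<alpha> \<delta> i})"
proof (rule subsetI, rule ccontr)
  interpret prob_space M by fact
  have mean_in_range: "\<mu> j \<in> {a..b}"
    using expectation_in_interval[OF rv range] mean \<open>j \<in> {1..K}\<close> by (metis order_refl)
  fix \<omega>
  assume bad: "\<omega> \<in> (\<Union>i\<in>{1..}. {\<omega> \<in> space M. \<bar>\<mu>t j i \<omega> - \<mu> j\<bar> > Urad a b \<sigma> K \<alpha> B \<delta> i})"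
    and good: "\<omega> \<notin> (\<Union>i\<in>{1..}. {\<omega> \<in> space M. \<bar>emp_mean r \<alpha> j i \<omega> - \<mu> j\<bar> > Uprime \<sigma> K \<alpha> \<delta> i})"
  then have \<omega>: "\<omega> \<in> space M" by blast
  have "\<bar>\<mu>t j i \<omega> - \<mu> j\<bar> \<le> Urad a b \<sigma> K \<alpha> B \<delta> i" for i
  proof (rule decoded_error_le_Urad)
    show "\<bar>\<mu>t j 0 \<omega> - \<mu> j\<bar> \<le> b - a"
      using init_range[OF \<open>j \<in> {1..K}\<close> \<omega>] mean_in_range by auto
  qed (use good \<omega> decode[OF \<open>j \<in> {1..K}\<close> _ \<omega>] in \<open>auto simp: not_less\<close>)
  then show False using bad by (auto simp: not_less[symmetric])
qed

end
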